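(* Let $X$ be an infinite-dimensional separable (real or complex) Banach space and let $A$ be an operator in $X$ satisfying all hypotheses of Theorem 2.1: $A$ is densely defined, $A^r$ is closed for all $r\ge1$, and there are a dense set $X_0\subset\bigcap_n D(A^n)$ and $B:X_0\to X_0$ with $ABx=x$, and $\sum_{n\ge1}A^nx$, $\sum_{n\ge1}B^nx$ unconditionally convergent for all $x\in X_0$. Then for every scalar $\lambda$ with $|\lambda|=1$, the operator $\lambda A$ is frequently hypercyclic.
   Context: A series $\sum_k x_k$ converges unconditionally if for every $\varepsilon>0$ there is $N$ with $\|\sum_{k\in F}x_k\|<\varepsilon$ for every finite $F\subset\mathbb{N}$ disjoint from $\{1,\dots,N\}$. An operator $T$ is frequently hypercyclic if there is $f\in D(T)$ with $T^nf\in D(T)$ for all $n\ge1$ such that for every non-empty open $U\subset X$ the set $\{n: T^nf\in U\}$ has positive lower density, where the lower density of $E\subset\mathbb{N}$ is $\liminf_{N}\#(E\cap\{1,\dots,N\})/N$. *)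

theory Defs
  imports "HOL-Analysis.Analysis" "HOL-Library.Extended_Real"
begin

text \<open>A (real) Banach space of type 'a carries a scalar field K, which is either
  the reals or the complex numbers (embedded in complex), with a scalar
  multiplication smul extending the real one and a norm that is absolutely
  homogeneous for it.\<close>
definition scalar_structure :: "complex set \<Rightarrow> (complex \<Rightarrow> 'a::banach \<Rightarrow> 'a) \<Rightarrow> bool" where
  "scalar_structure K smul \<longleftrightarrow>
     (K = range complex_of_real \<or> K = UNIV) \<and>
     (\<forall>r x. smul (complex_of_real r) x = r *\<^sub>R x) \<and>
     (\<forall>a\<in>K. \<forall>b\<in>K. \<forall>x. smul (a * b) x = smul a (smul b x)) \<and>
     (\<forall>a\<in>K. \<forall>b\<in>K. \<forall>x. smul (a + b) x = smul a x + smul b x) \<and>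
     (\<forall>a\<in>K. \<forall>x y. smul a (x + y) = smul a x + smul a y) \<and>
     (\<forall>a\<in>K. \<forall>x. norm (smul a x) = cmod a * norm x)"

definition infinite_dim :: "complex set \<Rightarrow> (complex \<Rightarrow> 'a::banach \<Rightarrow> 'a) \<Rightarrow> bool" where
  "infinite_dim K smul \<longleftrightarrow>
     \<not> (\<exists>F. finite F \<and> (\<forall>x. \<exists>c. (\<forall>v\<in>F. c v \<in> K) \<and> x = (\<Sum>v\<in>F. smul (c v) v)))"

definition separable_space :: "'a::topological_space itself \<Rightarrow> bool" where
  "separable_space _ \<longleftrightarrow> (\<exists>C::'a set. countable C \<and> closure C = UNIV)"

text \<open>A (possibly unbounded) K-linear operator with domain D; the values of the
  HOL function A outside D are irrelevant.\<close>
definition linear_operator ::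
  "complex set \<Rightarrow> (complex \<Rightarrow> 'a::banach \<Rightarrow> 'a) \<Rightarrow> 'a set \<Rightarrow> ('a \<Rightarrow> 'a) \<Rightarrow> bool" where
  "linear_operator K smul D A \<longleftrightarrow>
     0 \<in> D \<and> (\<forall>x\<in>D. \<forall>y\<in>D. x + y \<in> D) \<and> (\<forall>c\<in>K. \<forall>x\<in>D. smul c x \<in> D) \<and>
     (\<forall>x\<in>D. \<forall>y\<in>D. A (x + y) = A x + A y) \<and>
     (\<forall>c\<in>K. \<forall>x\<in>D. A (smul c x) = smul c (A x))"

definition pow_dom :: "'a set \<Rightarrow> ('a \<Rightarrow> 'a) \<Rightarrow> nat \<Rightarrow> 'a set" where
  "pow_dom D A n = {x. \<forall>k<n. (A ^^ k) x \<in> D}"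

definition closed_pow :: "'a::banach set \<Rightarrow> ('a \<Rightarrow> 'a) \<Rightarrow> nat \<Rightarrow> bool" where
  "closed_pow D A n \<longleftrightarrow> closed {(x, (A ^^ n) x) | x. x \<in> pow_dom D A n}"

text \<open>Unconditional convergence of the series sum over k of x k , indices k >= 1 (as in the paper, where N = {1,2,...}).\<close>
definition uncond_conv :: "(nat \<Rightarrow> 'a::real_normed_vector) \<Rightarrow> bool" where
  "uncond_conv x \<longleftrightarrow>
     (\<forall>\<epsilon>>0. \<exists>N. \<forall>F. finite F \<and> F \<subseteq> {1..} \<and> F \<inter> {1..N} = {} \<longrightarrow> norm (\<Sum>k\<in>F. x k) < \<epsilon>)"

definition lower_density :: "nat set \<Rightarrow> ereal" where
  "lower_density E = Liminf sequentially (\<lambda>N. ereal (real (card (E \<inter> {1..N})) / real N))"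

definition freq_hypercyclic :: "'a::topological_space set \<Rightarrow> ('a \<Rightarrow> 'a) \<Rightarrow> bool" where
  "freq_hypercyclic D T \<longleftrightarrow>
     (\<exists>f. f \<in> D \<and> (\<forall>n\<ge>1. (T ^^ n) f \<in> D) \<and>
        (\<forall>U. open U \<and> U \<noteq> {} \<longrightarrow> lower_density {n. (T ^^ n) f \<in> U} > 0))"

end

(*
  The rotated operator lam A satisfies a frequent hypercyclicity criterion with the right
  inverses S_n = (cnj lam)^n B^n of its powers, so it suffices to prove that criterion for an
  additive operator T with closed powers. Choose a sequence (y_k) in X0 that comes close to every
  point at arbitrarily large indices, and sets E_k of positive lower density whose elements are far
  apart from each other, the more so the larger k is. Put x = sum_k sum_{n in E_k} S_n y_k.
  For m in E_k the term n = m of T^m x is y_k, and all other terms are tails of the unconditionally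
  convergent series sum_n T^n y_j and sum_n S_n y_j, so T^m x is close to y_k; closedness of T^m
  justifies applying T^m termwise. Hence every set of return times of the orbit of x to an open set
  contains some E_k.
*)
theory Submission
  imports Defs
begin

section \<open>Separated sets of positive lower density\<close>

lemma sum_half_powers_atLeastLessThan:
  "a \<le> b \<Longrightarrow> (\<Sum>j\<in>{a..<b}. (1/2::real)^j) = 2 * (1/2)^a - 2 * (1/2)^b"
  by (induction b rule: dec_induct) simp_all

lemma sum_half_powers_le:
  assumes "finite S" and "\<forall>j\<in>S. a \<le> j"
  shows "(\<Sum>j\<in>S. (1/2::real)^j) \<le> 2 * (1/2)^a"
proof -
  define b where "b = Suc (Max (insert a S))"
  have "S \<subseteq> {a..<b}" using assms by (auto simp: b_def less_Suc_eq_le)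
  hence "(\<Sum>j\<in>S. (1/2::real)^j) \<le> (\<Sum>j\<in>{a..<b}. (1/2)^j)"
    by (intro sum_mono2) auto
  also have "\<dots> = 2 * (1/2)^a - 2 * (1/2)^b"
    by (rule sum_half_powers_atLeastLessThan) (simp add: b_def le_Suc_eq assms(1))
  also have "\<dots> \<le> 2 * (1/2)^a" by simp
  finally show ?thesis .
qed

lemma sum_if_less_half_powers_le:
  assumes "0 \<le> c"
  shows "(\<Sum>j<b. if j < J then c else (1/2::real)^j) \<le> real J * c + 2 * (1/2)^J"
proof -
  let ?f = "\<lambda>j. if j < J then c else (1/2::real)^j"
  have "sum ?f {..<b} = sum ?f (({..<b} \<inter> {..<J}) \<union> {J..<b})"
    by (rule sum.cong) auto
  also have "\<dots> = sum ?f ({..<b} \<inter> {..<J}) + sum ?f {J..<b}"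
    by (rule sum.union_disjoint) auto
  also have "sum ?f ({..<b} \<inter> {..<J}) = real (card ({..<b} \<inter> {..<J})) * c"
    by simp
  also have "\<dots> \<le> real J * c"
    using assms by (intro mult_right_mono) (auto intro: order_trans[OF card_mono[of "{..<J}"]])
  also have "sum ?f {J..<b} = (\<Sum>j\<in>{J..<b}. (1/2)^j)" by simp
  also have "\<dots> \<le> 2 * (1/2)^J" by (rule sum_half_powers_le) auto
  finally show ?thesis by simp
qed

definition separated_by :: "(nat \<Rightarrow> nat) \<Rightarrow> (nat \<Rightarrow> nat set) \<Rightarrow> bool" where
  "separated_by L E \<longleftrightarrow>
     (\<forall>j. \<forall>n\<in>E j. L j \<le> n) \<and>
     (\<forall>j k. \<forall>n\<in>E j. \<forall>m\<in>E k. n < m \<longrightarrow> L j + n \<le> m \<and> L k + n \<le> m) \<and>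
     (\<forall>j k. j \<noteq> k \<longrightarrow> E j \<inter> E k = {})"

lemma separated_by_mono:
  "separated_by L' E \<Longrightarrow> (\<And>j. L j \<le> L' j) \<Longrightarrow> separated_by L E"
  unfolding separated_by_def by (meson add_le_mono1 order_trans)

text \<open>If \<open>M\<close> grows fast enough, the excluded neighbourhoods are too sparse to destroy the
  density \<open>1 / M k\<close> of the multiples of \<open>M k\<close>.\<close>
definition sparse_multiples :: "(nat \<Rightarrow> nat) \<Rightarrow> (nat \<Rightarrow> nat) \<Rightarrow> nat \<Rightarrow> nat set" where
  "sparse_multiples L M k = {n. L k \<le> n \<and> M k dvd n \<and>
     (\<forall>l>k. \<forall>p\<ge>1. L l + n \<le> p * M l \<or> L l + p * M l \<le> n)}"

lemma sparse_multiples_eq_mult: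
  assumes "n \<in> sparse_multiples L M k" and "1 \<le> L k"
  obtains p where "1 \<le> p" and "n = p * M k"
proof -
  have "M k dvd n" using assms(1) by (simp add: sparse_multiples_def)
  then obtain p where p: "n = M k * p" by (rule dvdE)
  have "p \<noteq> 0" using p assms by (cases "p = 0") (auto simp: sparse_multiples_def)
  thus ?thesis using p that[of p] by (simp add: mult.commute)
qed

lemma sparse_multiples_far:
  assumes "j < k" and "n \<in> sparse_multiples L M j" and "m \<in> sparse_multiples L M k"
    and "1 \<le> L k"
  shows "L k + n \<le> m \<or> L k + m \<le> n"
proof -
  obtain p where "1 \<le> p" "m = p * M k"
    using sparse_multiples_eq_mult[OF assms(3,4)] .
  thus ?thesis using assms(1,2) by (auto simp: sparse_multiples_def)
qed

lemma separated_by_sparse_multiples: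
  assumes mono: "mono L" and L_pos: "\<And>l. 1 \<le> L l" and L_le_M: "\<And>l. L l \<le> M l"
  shows "separated_by L (sparse_multiples L M)"
proof -
  let ?E = "sparse_multiples L M"
  have gap: "L j + n \<le> m \<and> L k + n \<le> m"
    if n: "n \<in> ?E j" and m: "m \<in> ?E k" and "n < m" for j k n m
  proof -
    consider "j = k" | "j < k" | "k < j" by linarith
    then show ?thesis
    proof cases
      case 1
      obtain a b where "n = a * M k" "m = b * M k"
        using n m 1 L_pos sparse_multiples_eq_mult by metis
      hence "a + 1 \<le> b" using \<open>n < m\<close> by simp
      hence "(a + 1) * M k \<le> m" using \<open>m = b * M k\<close> by (metis mult_le_mono1)
      hence "n + M k \<le> m" using \<open>n = a * M k\<close> by simp
      thus ?thesis using L_le_M[of k] 1 by simp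
    next
      case 2
      hence "L k + n \<le> m" using sparse_multiples_far[OF 2 n m L_pos] \<open>n < m\<close> by linarith
      moreover have "L j \<le> L k" using 2 mono by (simp add: mono_def)
      ultimately show ?thesis by simp
    next
      case 3
      hence "L j + n \<le> m" using sparse_multiples_far[OF 3 m n L_pos] \<open>n < m\<close> by linarith
      moreover have "L k \<le> L j" using 3 mono by (simp add: mono_def)
      ultimately show ?thesis by simp
    qed
  qed
  have disjoint: "n \<notin> ?E j \<inter> ?E k" if "j \<noteq> k" for j k n
  proof
    assume "n \<in> ?E j \<inter> ?E k"
    moreover have "j < k \<or> k < j" using that by linarith
    ultimately show False
      using sparse_multiples_far[of j k n L M n] sparse_multiples_far[of k j n L M n]
        L_pos[of j] L_pos[of k]
      by auto
  qed
  have "L j \<le> n" if "n \<in> ?E j" for j n using that by (simp add: sparse_multiples_def)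
  then show ?thesis unfolding separated_by_def using gap disjoint by blast
qed

lemma sparse_multiples_superset:
  assumes M_gt: "\<And>l. L l + l < M l"
  shows "(\<lambda>q. q * M k) ` {1..N div M k} - {..<L k}
           - (\<Union>l\<in>{k<..N}. \<Union>p\<in>{1..(N + L l) div M l}. {p * M l + 1 - L l ..< p * M l + L l})
         \<subseteq> sparse_multiples L M k \<inter> {1..N}"
    (is "?Good - _ - ?Bad \<subseteq> _")
proof
  fix n assume n: "n \<in> ?Good - {..<L k} - ?Bad"
  then obtain q where q: "1 \<le> q" "q \<le> N div M k" "n = q * M k" by auto
  have "n \<le> N div M k * M k" using q by (simp add: mult_le_mono1)
  hence n_le: "n \<le> N" using div_times_less_eq_dividend order_trans by blast
  have M_pos: "0 < M l" for l using M_gt[of l] by simp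
  have far: "L l + n \<le> p * M l \<or> L l + p * M l \<le> n" if "k < l" "1 \<le> p" for l p
  proof (rule ccontr)
    assume "\<not> ?thesis"
    hence near: "p * M l < L l + n" "n < L l + p * M l" by auto
    have "M l \<le> p * M l" using that(2) by simp
    hence "l \<le> N" using M_gt[of l] near n_le by linarith
    moreover have "p \<le> (N + L l) div M l"
      using near n_le M_pos[of l] by (metis add.commute add_le_mono1 div_le_mono
          nonzero_mult_div_cancel_right less_imp_le order_trans not_gr_zero less_irrefl)
    ultimately have "n \<in> ?Bad" using that near by fastforce
    thus False using n by blast
  qed
  show "n \<in> sparse_multiples L M k \<inter> {1..N}"
    using n q n_le far M_pos[of k] by (auto simp: sparse_multiples_def)
qed

lemma div_mult_le_half_power:
  fixes N L m M' l :: nat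
  assumes M': "2^(l+5) * (L+1)^2 * m \<le> M'" and m: "0 < m"
  shows "real ((N + L) div M' * (2*L)) \<le> (real N + 2 * real m) / real m * (1/2)^(l+5)"
proof -
  have M'_pos: "0 < M'" using M' m by (metis less_le_trans mult_pos_pos pos2 zero_less_power
        add_gr_0 zero_less_one)
  have "(N+L)*(2*L) \<le> (N+2*m)*(L+1)^2"
  proof -
    have "2*L \<le> (L+1)^2" by (simp add: power2_eq_square)
    hence x: "N*(2*L) \<le> N*(L+1)^2" by simp
    have "L*L \<le> (L+1)^2" by (simp add: power2_eq_square)
    also have "\<dots> \<le> m * (L+1)^2" using m by simp
    finally have y: "L*(2*L) \<le> 2*m*(L+1)^2" by simp
    show ?thesis using add_mono[OF x y] by (simp add: algebra_simps)
  qed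
  hence "(N+L)*(2*L)*m*2^(l+5) \<le> (N+2*m)*(L+1)^2*m*2^(l+5)"
    by (intro mult_right_mono) auto
  also have "\<dots> = (N+2*m)*(2^(l+5)*(L+1)^2*m)" by (simp add: algebra_simps)
  also have "\<dots> \<le> (N+2*m)*M'" using M' by (intro mult_left_mono) auto
  finally have "real (N+L) * real (2*L) * real m * 2^(l+5) \<le> (real N + 2*real m) * real M'"
    by (metis (mono_tags) of_nat_le_iff of_nat_mult of_nat_add of_nat_numeral of_nat_power)
  hence "real (N+L) / real M' * real (2*L) \<le> (real N + 2 * real m) / real m * (1/2)^(l+5)"
    using M'_pos m by (simp add: field_simps power_one_over)
  moreover have "real ((N + L) div M' * (2*L)) \<le> real (N+L) / real M' * real (2*L)"
    unfolding of_nat_mult by (intro mult_right_mono of_nat_div_le_of_nat) auto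
  ultimately show ?thesis by linarith
qed

lemma card_near_multiples_le:
  assumes M_growth: "\<And>l. k < l \<Longrightarrow> 2^(l+5) * (L l + 1)^2 * M k \<le> M l" and Mk: "0 < M k"
  shows "real (card (\<Union>l\<in>{k<..N}. \<Union>p\<in>{1..(N + L l) div M l}. {p * M l + 1 - L l ..< p * M l + L l}))
           \<le> real N / real (M k) / 16 + 1 / 8"
    (is "real (card ?Bad) \<le> _")
proof -
  have "card ?Bad \<le> (\<Sum>l\<in>{k<..N}. card (\<Union>p\<in>{1..(N + L l) div M l}.
                                 {p * M l + 1 - L l ..< p * M l + L l}))"
    by (rule card_UN_le) simp
  also have "\<dots> \<le> (\<Sum>l\<in>{k<..N}. (N + L l) div M l * (2 * L l))"
  proof (rule sum_mono)
    fix l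
    have "card (\<Union>p\<in>{1..(N + L l) div M l}. {p * M l + 1 - L l ..< p * M l + L l})
          \<le> (\<Sum>p\<in>{1..(N + L l) div M l}. card {p * M l + 1 - L l ..< p * M l + L l})"
      by (rule card_UN_le) simp
    also have "\<dots> \<le> (\<Sum>p\<in>{1..(N + L l) div M l}. 2 * L l)" by (intro sum_mono) simp
    finally show "card (\<Union>p\<in>{1..(N + L l) div M l}. {p * M l + 1 - L l ..< p * M l + L l})
                  \<le> (N + L l) div M l * (2 * L l)" by simp
  qed
  finally have "real (card ?Bad) \<le> (\<Sum>l\<in>{k<..N}. real ((N + L l) div M l * (2 * L l)))"
    unfolding of_nat_sum[symmetric] of_nat_le_iff .
  also have "\<dots> \<le> (\<Sum>l\<in>{k<..N}. (real N + 2 * real (M k)) / real (M k) * (1/2)^(l+5))"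
    using M_growth Mk by (intro sum_mono div_mult_le_half_power) auto
  also have "\<dots> = (real N / real (M k) + 2) / 32 * (\<Sum>l\<in>{k<..N}. (1/2)^l)"
    unfolding sum_distrib_left using Mk
    by (intro sum.cong refl) (simp add: power_add field_simps)
  also have "\<dots> \<le> (real N / real (M k) + 2) / 32 * 2"
    by (intro mult_left_mono sum_half_powers_le[of _ 0, simplified]) auto
  also have "\<dots> = real N / real (M k) / 16 + 1 / 8" by (simp add: field_simps)
  finally show ?thesis .
qed

lemma card_sparse_multiples_ge:
  assumes M_gt: "\<And>l. L l + l < M l"
    and M_growth: "\<And>l. k < l \<Longrightarrow> 2^(l+5) * (L l + 1)^2 * M k \<le> M l"
    and N: "3 * M k * (L k + 2) \<le> N"
  shows "real N / (2 * real (M k)) \<le> real (card (sparse_multiples L M k \<inter> {1..N}))"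
proof -
  define Good where "Good = (\<lambda>q. q * M k) ` {1..N div M k}"
  define Bad where "Bad = (\<Union>l\<in>{k<..N}. \<Union>p\<in>{1..(N + L l) div M l}.
                              {p * M l + 1 - L l ..< p * M l + L l})"
  define q where "q = real N / real (M k)"
  have Mk: "0 < M k" using M_gt[of k] by simp
  have "real (3 * M k * (L k + 2)) \<le> real N" using N by (simp only: of_nat_le_iff)
  hence q_ge: "3 * real (L k) + 6 \<le> q"
    using Mk by (simp add: q_def pos_le_divide_eq algebra_simps)
  have "card Good = N div M k"
    unfolding Good_def using Mk by (subst card_image) (auto simp: inj_on_def)
  moreover have "q = real (N div M k) + real (N mod M k) / real (M k)"
    unfolding q_def by (rule of_nat_of_nat_div_aux)
  moreover have "real (N mod M k) / real (M k) < 1" using Mk by simp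
  ultimately have card_Good: "q - 1 \<le> real (card Good)" by linarith
  have card_Bad: "real (card Bad) \<le> q / 16 + 1 / 8"
    unfolding Bad_def q_def by (rule card_near_multiples_le[OF M_growth Mk])
  have fin: "finite Good" "finite Bad" by (simp_all add: Good_def Bad_def)
  have "Good \<subseteq> (Good - {..<L k} - Bad) \<union> {..<L k} \<union> Bad" by auto
  hence "card Good \<le> card ((Good - {..<L k} - Bad) \<union> {..<L k} \<union> Bad)"
    using fin by (intro card_mono) auto
  also have "\<dots> \<le> card (Good - {..<L k} - Bad) + card {..<L k} + card Bad"
    by (meson card_Un_le add_le_mono1 order_trans)
  also have "card (Good - {..<L k} - Bad) \<le> card (sparse_multiples L M k \<inter> {1..N})"
    using sparse_multiples_superset[OF M_gt, of k N] unfolding Good_def Bad_def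
    by (intro card_mono) auto
  finally have "real (card Good) \<le> real (card (sparse_multiples L M k \<inter> {1..N})) + real (L k)
                  + real (card Bad)"
    by simp
  moreover have "real N / (2 * real (M k)) = q / 2" by (simp add: q_def)
  ultimately show ?thesis using card_Good card_Bad q_ge by linarith
qed

lemma lower_density_mono: "A \<subseteq> B \<Longrightarrow> lower_density A \<le> lower_density B"
  unfolding lower_density_def
  by (intro Liminf_mono always_eventually allI) (auto intro!: divide_right_mono card_mono)

lemma lower_density_pos:
  assumes "0 < c" and "\<forall>\<^sub>F N in sequentially. c * real N \<le> real (card (E \<inter> {1..N}))"
  shows "0 < lower_density E"
proof -
  have "\<forall>\<^sub>F N in sequentially. ereal c \<le> ereal (real (card (E \<inter> {1..N})) / real N)"
    using assms(2) eventually_gt_at_top[of "0::nat"]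
    by eventually_elim (simp add: pos_le_divide_eq)
  hence "ereal c \<le> lower_density E" unfolding lower_density_def by (rule Liminf_bounded)
  thus ?thesis using assms(1) by (metis ereal_less(2) order_less_le_trans)
qed

lemma exists_separated_sets_pos_density:
  fixes L :: "nat \<Rightarrow> nat"
  obtains E where "separated_by L E" and "\<And>j. 0 < lower_density (E j)"
proof -
  define L' where "L' j = (\<Sum>i\<le>j. L i) + 1" for j
  define f where "f l = 2^(l+5) * (L' l + 1)^2" for l :: nat
  define M where "M l = (\<Prod>i\<le>l. f i)" for l
  have f_ge: "1 \<le> f l" for l by (simp add: f_def)
  have M_Suc: "M (Suc l) = M l * f (Suc l)" for l by (simp add: M_def)
  have "mono M" unfolding mono_iff_le_Suc M_Suc using f_ge by simp
  have "1 \<le> M l" for l unfolding M_def using f_ge by (intro prod_ge_1) auto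
  hence f_le_M: "f l \<le> M l" for l by (cases l) (simp_all add: M_def M_Suc)
  have M_gt: "L' l + l < M l" for l
  proof -
    have "l < 2^l" by (rule less_exp)
    also have "\<dots> \<le> 2^(l+5)" by (rule power_increasing) simp_all
    finally have "l + L' l < 2^(l+5) + L' l * 2^(l+5)" by (intro add_less_le_mono) simp_all
    hence "L' l + l < (L' l + 1) * 2^(l+5)" by (simp add: algebra_simps)
    also have "\<dots> \<le> f l" by (simp add: f_def power2_eq_square)
    finally show ?thesis using f_le_M[of l] by linarith
  qed
  have M_growth: "2^(l+5) * (L' l + 1)^2 * M k \<le> M l" if "k < l" for k l
  proof -
    obtain l' where l': "l = Suc l'" "k \<le> l'" using \<open>k < l\<close> by (cases l) auto
    hence "M k \<le> M l'" using \<open>mono M\<close> by (simp add: mono_def)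
    thus ?thesis by (simp add: l' M_Suc f_def)
  qed
  have "mono L'" by (auto simp: mono_def L'_def intro!: sum_mono2)
  moreover have "1 \<le> L' l" for l by (simp add: L'_def)
  moreover have "L' l \<le> M l" for l using M_gt[of l] by simp
  ultimately have "separated_by L' (sparse_multiples L' M)"
    by (rule separated_by_sparse_multiples)
  moreover have "L j \<le> L' j" for j
    using member_le_sum[of j "{..j}" L] by (simp add: L'_def)
  ultimately have "separated_by L (sparse_multiples L' M)"
    by (rule separated_by_mono)
  moreover have "0 < lower_density (sparse_multiples L' M j)" for j
  proof (rule lower_density_pos)
    have "0 < M j" using M_gt[of j] by simp
    thus "0 < 1 / (2 * real (M j))" by simp
    show "\<forall>\<^sub>F N in sequentially. 1 / (2 * real (M j)) * real N
            \<le> real (card (sparse_multiples L' M j \<inter> {1..N}))"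
      using eventually_ge_at_top[of "3 * M j * (L' j + 2)"]
      by eventually_elim (use card_sparse_multiples_ge[OF M_gt M_growth] in simp)
  qed
  ultimately show ?thesis using that by blast
qed

section \<open>Unconditionally convergent series\<close>

lemma uncond_conv_iff:
  "uncond_conv u \<longleftrightarrow>
     (\<forall>e>0. \<exists>N. \<forall>F. finite F \<longrightarrow> (\<forall>d\<in>F. N < d) \<longrightarrow> norm (sum u F) < e)"
proof -
  have "F \<subseteq> {1..} \<and> F \<inter> {1..N} = {} \<longleftrightarrow> (\<forall>d\<in>F. N < d)" for F :: "nat set" and N
    by (auto simp: disjoint_iff)
  thus ?thesis unfolding uncond_conv_def by (metis (no_types, lifting))
qed

text \<open>The expression is affine in each coefficient, so it suffices to take all coefficients in
  \<open>{0, 1}\<close>.\<close>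
lemma norm_add_sum_scaleR_le_of_subsums:
  fixes u :: "nat \<Rightarrow> 'a::real_normed_vector"
  assumes "finite F" and "\<forall>G\<subseteq>F. norm (v + sum u G) \<le> M" and "\<forall>d\<in>F. 0 \<le> a d \<and> a d \<le> 1"
  shows "norm (v + (\<Sum>d\<in>F. a d *\<^sub>R u d)) \<le> M"
  using assms
proof (induction F arbitrary: v rule: finite_induct)
  case empty then show ?case by auto
next
  case (insert x F)
  let ?s = "\<Sum>d\<in>F. a d *\<^sub>R u d"
  have without_x: "norm (v + ?s) \<le> M"
    using insert by (intro insert.IH) auto
  have "norm (v + u x + sum u G) \<le> M" if "G \<subseteq> F" for G
  proof -
    have "v + u x + sum u G = v + sum u (insert x G)"
      using that insert finite_subset by (subst sum.insert) (auto simp: algebra_simps)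
    thus ?thesis using insert.prems(1) that by (metis insert_mono)
  qed
  hence with_x: "norm ((v + u x) + ?s) \<le> M"
    using insert by (intro insert.IH) auto
  have a: "0 \<le> a x" "a x \<le> 1" using insert by auto
  have "v + (\<Sum>d\<in>insert x F. a d *\<^sub>R u d) = (1 - a x) *\<^sub>R (v + ?s) + a x *\<^sub>R ((v + u x) + ?s)"
    using insert by (simp add: algebra_simps)
  also have "norm \<dots> \<le> (1 - a x) * M + a x * M"
    using without_x with_x a
    by (intro norm_triangle_le add_mono) (simp_all add: mult_left_mono)
  finally show ?case by (simp add: algebra_simps)
qed

lemma norm_sum_scaleR_le_of_subsums:
  fixes u :: "nat \<Rightarrow> 'a::real_normed_vector"
  assumes "finite F" and "\<forall>G\<subseteq>F. norm (sum u G) \<le> M" and "\<forall>d\<in>F. \<bar>a d\<bar> \<le> 1"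
  shows "norm (\<Sum>d\<in>F. a d *\<^sub>R u d) \<le> 2 * M"
proof -
  have pos: "norm (0 + (\<Sum>d\<in>F. max (a d) 0 *\<^sub>R u d)) \<le> M"
    using assms by (intro norm_add_sum_scaleR_le_of_subsums) auto
  have neg: "norm (0 + (\<Sum>d\<in>F. max (- a d) 0 *\<^sub>R u d)) \<le> M"
    using assms by (intro norm_add_sum_scaleR_le_of_subsums) auto
  have "(\<Sum>d\<in>F. a d *\<^sub>R u d) = (\<Sum>d\<in>F. max (a d) 0 *\<^sub>R u d) - (\<Sum>d\<in>F. max (- a d) 0 *\<^sub>R u d)"
    unfolding sum_subtractf[symmetric] by (intro sum.cong refl) (simp add: max_def algebra_simps)
  also have "norm \<dots> \<le> M + M" using pos neg by (simp add: norm_triangle_le_diff)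
  finally show ?thesis by simp
qed

section \<open>The frequent hypercyclicity criterion\<close>

lemma closed_pow_tendsto:
  assumes "closed_pow D A m" and "\<And>N. f N \<in> pow_dom D A m"
    and "f \<longlonglongrightarrow> x" and "(\<lambda>N. (A ^^ m) (f N)) \<longlonglongrightarrow> z"
  shows "x \<in> pow_dom D A m" and "(A ^^ m) x = z"
proof -
  have "(x, z) \<in> {(x, (A ^^ m) x) | x. x \<in> pow_dom D A m}"
    using assms(1) unfolding closed_pow_def
    by (rule closed_sequentially) (use assms(2-4) in \<open>auto intro: tendsto_Pair\<close>)
  thus "x \<in> pow_dom D A m" and "(A ^^ m) x = z" by auto
qed

locale additive_operator =
  fixes D :: "'a::ab_group_add set" and T :: "'a \<Rightarrow> 'a"
  assumes zero_in_dom: "0 \<in> D"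
    and add_in_dom: "\<And>x y. x \<in> D \<Longrightarrow> y \<in> D \<Longrightarrow> x + y \<in> D"
    and additive: "\<And>x y. x \<in> D \<Longrightarrow> y \<in> D \<Longrightarrow> T (x + y) = T x + T y"
begin

lemma T_zero: "T 0 = 0"
  using additive[OF zero_in_dom zero_in_dom] by simp

lemma funpow_zero: "(T ^^ n) 0 = 0"
  by (induction n) (simp_all add: T_zero)

lemma zero_in_pow_dom: "0 \<in> pow_dom D T n"
  by (simp add: pow_dom_def funpow_zero zero_in_dom)

lemma pow_dom_add:
  assumes "x \<in> pow_dom D T n" and "y \<in> pow_dom D T n"
  shows "x + y \<in> pow_dom D T n" and "(T ^^ n) (x + y) = (T ^^ n) x + (T ^^ n) y"
proof -
  have eq: "(T ^^ k) (x + y) = (T ^^ k) x + (T ^^ k) y" if "k \<le> n" for k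
    using that
  proof (induction k)
    case (Suc k)
    hence "(T ^^ k) x \<in> D" "(T ^^ k) y \<in> D" using assms by (auto simp: pow_dom_def)
    thus ?case using Suc by (simp add: additive)
  qed simp
  show "(T ^^ n) (x + y) = (T ^^ n) x + (T ^^ n) y" using eq by simp
  show "x + y \<in> pow_dom D T n"
    using assms eq by (auto simp: pow_dom_def add_in_dom)
qed

lemma pow_dom_sum:
  assumes "finite F" and "\<And>i. i \<in> F \<Longrightarrow> f i \<in> pow_dom D T n"
  shows "sum f F \<in> pow_dom D T n" and "(T ^^ n) (sum f F) = (\<Sum>i\<in>F. (T ^^ n) (f i))"
  using assms by (induction F rule: finite_induct) (simp_all add: zero_in_pow_dom funpow_zero pow_dom_add)

end

locale frequent_hypercyclicity_criterion = additive_operator D T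
  for D :: "'a::banach set" and T :: "'a \<Rightarrow> 'a" +
  fixes X0 :: "'a set" and S :: "nat \<Rightarrow> 'a \<Rightarrow> 'a"
  assumes closed_powers: "\<And>r. 1 \<le> r \<Longrightarrow> closed_pow D T r"
    and S_in_pow_dom: "\<And>y n m. y \<in> X0 \<Longrightarrow> S n y \<in> pow_dom D T m"
    and S_0: "\<And>y. y \<in> X0 \<Longrightarrow> S 0 y = y"
    and T_pow_S: "\<And>y m n. y \<in> X0 \<Longrightarrow> m \<le> n \<Longrightarrow> (T ^^ m) (S n y) = S (n - m) y"
    and uncond_T: "\<And>y. y \<in> X0 \<Longrightarrow> uncond_conv (\<lambda>n. (T ^^ n) y)"
    and uncond_S: "\<And>y. y \<in> X0 \<Longrightarrow> uncond_conv (\<lambda>n. S n y)"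
begin

lemma T_pow_S_eq:
  assumes "y \<in> X0"
  shows "(T ^^ m) (S n y) = (if m \<le> n then S (n - m) y else (T ^^ (m - n)) y)"
proof (cases "m \<le> n")
  case False
  hence "(T ^^ m) (S n y) = (T ^^ ((m - n) + n)) (S n y)" by simp
  also have "\<dots> = (T ^^ (m - n)) ((T ^^ n) (S n y))" by (simp add: funpow_add)
  finally show ?thesis using False T_pow_S[OF assms, of n n] S_0[OF assms] by simp
qed (simp add: T_pow_S assms)

lemma uncond_tails:
  assumes "y \<in> X0" and "0 < e"
  obtains r where "\<And>F. finite F \<Longrightarrow> \<forall>d\<in>F. r < d \<Longrightarrow>
    norm (\<Sum>d\<in>F. (T ^^ d) y) < e \<and> norm (\<Sum>d\<in>F. S d y) < e"
proof -
  obtain r1 where "\<forall>F. finite F \<longrightarrow> (\<forall>d\<in>F. r1 < d) \<longrightarrow> norm (\<Sum>d\<in>F. (T ^^ d) y) < e"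
    using uncond_T[OF assms(1)] assms(2) unfolding uncond_conv_iff by blast
  moreover obtain r2 where "\<forall>F. finite F \<longrightarrow> (\<forall>d\<in>F. r2 < d) \<longrightarrow> norm (\<Sum>d\<in>F. S d y) < e"
    using uncond_S[OF assms(1)] assms(2) unfolding uncond_conv_iff by blast
  ultimately show ?thesis using that[of "max r1 r2"] by auto
qed

end

locale frequent_hypercyclicity_construction = frequent_hypercyclicity_criterion +
  fixes Y :: "nat \<Rightarrow> 'a::banach" and R :: "nat \<Rightarrow> nat \<Rightarrow> nat"
    and L :: "nat \<Rightarrow> nat" and E :: "nat \<Rightarrow> nat set"
  assumes Y_in_X0: "\<And>k. Y k \<in> X0"
    and R_tail: "\<And>i j F. finite F \<Longrightarrow> \<forall>d\<in>F. R i j < d \<Longrightarrow>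
       norm (\<Sum>d\<in>F. (T ^^ d) (Y i)) < (1/2)^j \<and> norm (\<Sum>d\<in>F. S d (Y i)) < (1/2)^j"
    and L_gt: "\<And>i j. i \<le> j \<Longrightarrow> R i j + j < L j"
    and E_separated: "separated_by L E"
begin

definition fhc_term :: "nat \<Rightarrow> 'a" where
  "fhc_term n = (if \<exists>j. n \<in> E j then S n (Y (THE j. n \<in> E j)) else 0)"

definition fhc_vector :: 'a where
  "fhc_vector = (\<Sum>n. fhc_term n)"

lemma E_ge: "n \<in> E j \<Longrightarrow> L j \<le> n"
  and E_gap: "n \<in> E j \<Longrightarrow> m \<in> E k \<Longrightarrow> n < m \<Longrightarrow> L j + n \<le> m \<and> L k + n \<le> m"
  and E_disjoint: "n \<in> E j \<Longrightarrow> n \<in> E k \<Longrightarrow> j = k"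
  using E_separated unfolding separated_by_def by blast+

lemma fhc_term_in_E: "n \<in> E j \<Longrightarrow> fhc_term n = S n (Y j)"
proof -
  assume "n \<in> E j"
  moreover have "(THE j. n \<in> E j) = j" using \<open>n \<in> E j\<close> E_disjoint by blast
  ultimately show ?thesis by (auto simp: fhc_term_def)
qed

lemma fhc_term_notin_E: "(\<And>j. n \<notin> E j) \<Longrightarrow> fhc_term n = 0"
  by (simp add: fhc_term_def)

lemma fhc_term_in_pow_dom: "fhc_term n \<in> pow_dom D T m"
  by (cases "\<exists>j. n \<in> E j")
     (auto simp: fhc_term_in_E fhc_term_notin_E S_in_pow_dom Y_in_X0 zero_in_pow_dom)

lemma T_pow_fhc_term:
  "n \<in> E j \<Longrightarrow> (T ^^ m) (fhc_term n) = (if m \<le> n then S (n - m) (Y j) else (T ^^ (m - n)) (Y j))"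
  by (simp add: fhc_term_in_E T_pow_S_eq Y_in_X0)

lemma sum_T_pow_fhc_term_split:
  assumes "F \<subseteq> {..<b}"
  shows "(\<Sum>n\<in>F. (T ^^ m) (fhc_term n)) = (\<Sum>j<b. \<Sum>n\<in>F \<inter> E j. (T ^^ m) (fhc_term n))"
proof -
  have fin: "finite F" using assms finite_subset by blast
  have "(\<Sum>j<b. \<Sum>n\<in>F \<inter> E j. (T ^^ m) (fhc_term n)) = (\<Sum>n\<in>(\<Union>j<b. F \<inter> E j). (T ^^ m) (fhc_term n))"
    by (rule sum.UNION_disjoint[symmetric]) (use fin E_disjoint in auto)
  also have "\<dots> = (\<Sum>n\<in>F. (T ^^ m) (fhc_term n))"
  proof (rule sum.mono_neutral_left[OF fin])
    have "j < b" if "n \<in> F" "n \<in> E j" for n j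
      using E_ge[OF that(2)] L_gt[of j j] that(1) assms by fastforce
    hence "\<And>n. n \<in> F - (\<Union>j<b. F \<inter> E j) \<Longrightarrow> \<forall>j. n \<notin> E j" by blast
    thus "\<forall>n\<in>F - (\<Union>j<b. F \<inter> E j). (T ^^ m) (fhc_term n) = 0"
      using fhc_term_notin_E funpow_zero by auto
  qed auto
  finally show ?thesis by simp
qed

text \<open>The terms of one block \<open>E j\<close> are values of the two series at \<open>Y j\<close>, indexed by the
  distance \<open>|n - m|\<close>.\<close>
lemma norm_block_less:
  assumes "finite F" and "m \<notin> F"
    and tails: "\<And>F'. finite F' \<Longrightarrow> \<forall>d\<in>F'. r < d \<Longrightarrow>
       norm (\<Sum>d\<in>F'. (T ^^ d) (Y j)) < c \<and> norm (\<Sum>d\<in>F'. S d (Y j)) < c"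
    and far: "\<And>n. n \<in> F \<inter> E j \<Longrightarrow> r + m < n \<or> r + n < m"
  shows "norm (\<Sum>n\<in>F \<inter> E j. (T ^^ m) (fhc_term n)) < 2 * c"
proof -
  let ?below = "F \<inter> E j \<inter> {..<m}" and ?above = "F \<inter> E j \<inter> {m<..}"
  have "F \<inter> E j = ?below \<union> ?above" using assms(2) by auto (metis linorder_neqE_nat)
  hence "(\<Sum>n\<in>F \<inter> E j. (T ^^ m) (fhc_term n))
          = (\<Sum>n\<in>?below. (T ^^ m) (fhc_term n)) + (\<Sum>n\<in>?above. (T ^^ m) (fhc_term n))"
    using assms(1) by (metis (no_types, lifting) sum.union_disjoint finite_Int Int_iff
        disjoint_iff lessThan_iff greaterThan_iff less_asym)
  also have "(\<Sum>n\<in>?below. (T ^^ m) (fhc_term n)) = (\<Sum>d\<in>(\<lambda>n. m - n) ` ?below. (T ^^ d) (Y j))"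
    by (subst sum.reindex) (auto simp: inj_on_def T_pow_fhc_term intro!: sum.cong)
  also have "(\<Sum>n\<in>?above. (T ^^ m) (fhc_term n)) = (\<Sum>d\<in>(\<lambda>n. n - m) ` ?above. S d (Y j))"
    by (subst sum.reindex) (auto simp: inj_on_def T_pow_fhc_term intro!: sum.cong)
  also have "norm ((\<Sum>d\<in>(\<lambda>n. m - n) ` ?below. (T ^^ d) (Y j)) + (\<Sum>d\<in>(\<lambda>n. n - m) ` ?above. S d (Y j)))
             < c + c"
    using tails[of "(\<lambda>n. m - n) ` ?below"] tails[of "(\<lambda>n. n - m) ` ?above"] assms(1) far
    by (intro norm_triangle_lt add_strict_mono) fastforce+
  finally show ?thesis by simp
qed

lemma norm_block_less_max:
  assumes "m \<in> E k" and "finite F" and "m \<notin> F"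
  shows "norm (\<Sum>n\<in>F \<inter> E j. (T ^^ m) (fhc_term n)) < 2 * (1/2)^(max j k)"
proof (rule norm_block_less[OF assms(2,3) R_tail])
  fix n assume n: "n \<in> F \<inter> E j"
  have "R j (max j k) < L (max j k)" using L_gt[of j "max j k"] by simp
  hence "R j (max j k) < L j \<or> R j (max j k) < L k" by (metis max_def)
  moreover have "n \<noteq> m" using n assms(3) by auto
  ultimately show "R j (max j k) + m < n \<or> R j (max j k) + n < m"
    using E_gap[of n j m k] E_gap[of m k n j] n assms(1) by (cases "n < m") auto
qed

lemma norm_block_less_beyond:
  assumes "finite F" and "F \<subseteq> {m<..}" and "m \<le> j"
  shows "norm (\<Sum>n\<in>F \<inter> E j. (T ^^ m) (fhc_term n)) < 2 * (1/2)^j"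
proof (rule norm_block_less[OF assms(1) _ R_tail])
  show "m \<notin> F" using assms(2) by auto
  fix n assume "n \<in> F \<inter> E j"
  thus "R j j + m < n \<or> R j j + n < m" using E_ge[of n j] L_gt[of j j] assms(3) by auto
qed

lemma norm_block_tail:
  assumes "0 < c"
  obtains N where "\<And>F. finite F \<Longrightarrow> \<forall>n\<in>F. N \<le> n \<Longrightarrow>
    norm (\<Sum>n\<in>F \<inter> E j. (T ^^ m) (fhc_term n)) < 2 * c"
proof -
  obtain r where r: "\<And>F. finite F \<Longrightarrow> \<forall>d\<in>F. r < d \<Longrightarrow>
      norm (\<Sum>d\<in>F. (T ^^ d) (Y j)) < c \<and> norm (\<Sum>d\<in>F. S d (Y j)) < c"
    using uncond_tails[OF Y_in_X0[of j] assms] by blast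
  have "norm (\<Sum>n\<in>F \<inter> E j. (T ^^ m) (fhc_term n)) < 2 * c"
    if "finite F" "\<forall>n\<in>F. r + m + 1 \<le> n" for F
    using that by (intro norm_block_less[OF _ _ r]) auto
  thus ?thesis using that by blast
qed

lemma norm_sum_T_pow_fhc_term_le:
  assumes "m \<in> E k" and "finite F" and "m \<notin> F"
  shows "norm (\<Sum>n\<in>F. (T ^^ m) (fhc_term n)) \<le> (2 * real k + 4) * (1/2)^k"
proof -
  define b where "b = Suc (Max (insert 0 F))"
  have "F \<subseteq> {..<b}" using assms(2) by (auto simp: b_def less_Suc_eq_le)
  hence split: "(\<Sum>n\<in>F. (T ^^ m) (fhc_term n)) = (\<Sum>j<b. \<Sum>n\<in>F \<inter> E j. (T ^^ m) (fhc_term n))"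
    by (rule sum_T_pow_fhc_term_split)
  have "norm (\<Sum>n\<in>F. (T ^^ m) (fhc_term n)) \<le> (\<Sum>j<b. norm (\<Sum>n\<in>F \<inter> E j. (T ^^ m) (fhc_term n)))"
    unfolding split by (rule norm_sum)
  also have "\<dots> \<le> (\<Sum>j<b. 2 * (if j < k then (1/2)^k else (1/2)^j))"
  proof (rule sum_mono)
    fix j
    have "(1/2::real)^(max j k) = (if j < k then (1/2)^k else (1/2)^j)"
      by (cases "j < k") (auto simp: max_def)
    thus "norm (\<Sum>n\<in>F \<inter> E j. (T ^^ m) (fhc_term n)) \<le> 2 * (if j < k then (1/2)^k else (1/2)^j)"
      using norm_block_less_max[OF assms, of j] by simp
  qed
  also have "\<dots> \<le> 2 * (real k * (1/2)^k + 2 * (1/2)^k)"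
    unfolding sum_distrib_left[symmetric] by (intro mult_left_mono sum_if_less_half_powers_le) simp_all
  finally show ?thesis by (simp add: algebra_simps)
qed

lemma norm_sum_T_pow_fhc_term_tail_le:
  assumes "m \<le> J" and "0 < c"
  obtains N0 where "\<And>a b. N0 \<le> a \<Longrightarrow>
    norm (\<Sum>n\<in>{a..<b}. (T ^^ m) (fhc_term n)) \<le> 2 * (real J * c + 2 * (1/2)^J)"
proof -
  have "\<forall>j. \<exists>N. \<forall>F. finite F \<longrightarrow> (\<forall>n\<in>F. N \<le> n) \<longrightarrow>
          norm (\<Sum>n\<in>F \<inter> E j. (T ^^ m) (fhc_term n)) < 2 * c"
    using norm_block_tail[OF \<open>0 < c\<close>] by metis
  then obtain N where N: "\<And>j F. finite F \<Longrightarrow> \<forall>n\<in>F. N j \<le> n \<Longrightarrow>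
      norm (\<Sum>n\<in>F \<inter> E j. (T ^^ m) (fhc_term n)) < 2 * c"
    by metis
  define N0 where "N0 = m + 1 + (\<Sum>j<J. N j)"
  have "norm (\<Sum>n\<in>{a..<b}. (T ^^ m) (fhc_term n)) \<le> 2 * (real J * c + 2 * (1/2)^J)"
    if "N0 \<le> a" for a b
  proof -
    have block: "norm (\<Sum>n\<in>{a..<b} \<inter> E j. (T ^^ m) (fhc_term n)) \<le> 2 * (if j < J then c else (1/2)^j)"
      for j
    proof (cases "j < J")
      case True
      hence "N j \<le> N0" unfolding N0_def using member_le_sum[of j "{..<J}" N] by simp
      thus ?thesis using N[of "{a..<b}" j] True that by fastforce
    next
      case False
      have "{a..<b} \<subseteq> {m<..}" using that by (auto simp: N0_def)
      thus ?thesis using norm_block_less_beyond[of "{a..<b}" m j] False assms(1) by simp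
    qed
    have "(\<Sum>n\<in>{a..<b}. (T ^^ m) (fhc_term n))
          = (\<Sum>j<b. \<Sum>n\<in>{a..<b} \<inter> E j. (T ^^ m) (fhc_term n))"
      by (rule sum_T_pow_fhc_term_split) auto
    hence "norm (\<Sum>n\<in>{a..<b}. (T ^^ m) (fhc_term n))
          \<le> (\<Sum>j<b. norm (\<Sum>n\<in>{a..<b} \<inter> E j. (T ^^ m) (fhc_term n)))"
      by (metis norm_sum)
    also have "\<dots> \<le> 2 * (\<Sum>j<b. if j < J then c else (1/2)^j)"
      unfolding sum_distrib_left by (intro sum_mono block)
    also have "\<dots> \<le> 2 * (real J * c + 2 * (1/2)^J)"
      using \<open>0 < c\<close> by (intro mult_left_mono sum_if_less_half_powers_le) simp_all
    finally show ?thesis .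
  qed
  thus ?thesis by (rule that)
qed

lemma summable_T_pow_fhc_term: "summable (\<lambda>n. (T ^^ m) (fhc_term n))"
  unfolding summable_Cauchy
proof (intro allI impI)
  fix e :: real assume "0 < e"
  have "(\<lambda>J. 4 * (1/2::real)^J) \<longlonglongrightarrow> 0"
    by (intro tendsto_mult_right_zero LIMSEQ_power_zero) simp
  hence "\<forall>\<^sub>F J in sequentially. 4 * (1/2::real)^J < e / 2"
    by (rule order_tendstoD(2)) (use \<open>0 < e\<close> in simp)
  then obtain J0 where J0: "\<And>J. J0 \<le> J \<Longrightarrow> 4 * (1/2::real)^J < e / 2"
    by (auto simp: eventually_sequentially)
  define J where "J = max m J0"
  define c where "c = e / (4 * (real J + 1))"
  have "0 < c" using \<open>0 < e\<close> by (simp add: c_def)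
  have "2 * (real J * c + 2 * (1/2)^J) < e"
  proof -
    have "2 * (real J * c) \<le> e / 2" using \<open>0 < e\<close> by (simp add: c_def field_simps)
    thus ?thesis using J0[of J] by (simp add: J_def)
  qed
  moreover have "m \<le> J" by (simp add: J_def)
  then obtain N0 where "\<And>a b. N0 \<le> a \<Longrightarrow>
      norm (\<Sum>n\<in>{a..<b}. (T ^^ m) (fhc_term n)) \<le> 2 * (real J * c + 2 * (1/2)^J)"
    using norm_sum_T_pow_fhc_term_tail_le[OF _ \<open>0 < c\<close>] by metis
  ultimately show "\<exists>N. \<forall>a\<ge>N. \<forall>b. norm (\<Sum>n\<in>{a..<b}. (T ^^ m) (fhc_term n)) < e"
    by (meson le_less_trans)
qed

lemma fhc_vector_in_pow_dom:
  shows "fhc_vector \<in> pow_dom D T m" and "(T ^^ m) fhc_vector = (\<Sum>n. (T ^^ m) (fhc_term n))"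
proof -
  have "closed_pow D T m"
    using closed_powers[of m] by (cases m) (simp_all add: closed_pow_def pow_dom_def closed_diagonal)
  moreover have "(\<Sum>n<N. fhc_term n) \<in> pow_dom D T m" for N
    by (simp add: pow_dom_sum(1) fhc_term_in_pow_dom)
  moreover have "(\<lambda>N. \<Sum>n<N. fhc_term n) \<longlonglongrightarrow> fhc_vector"
    using summable_LIMSEQ[OF summable_T_pow_fhc_term[of 0]] by (simp add: fhc_vector_def)
  moreover have "(\<lambda>N. (T ^^ m) (\<Sum>n<N. fhc_term n)) \<longlonglongrightarrow> (\<Sum>n. (T ^^ m) (fhc_term n))"
    using summable_LIMSEQ[OF summable_T_pow_fhc_term[of m]]
    by (simp add: pow_dom_sum(2) fhc_term_in_pow_dom)
  ultimately show "fhc_vector \<in> pow_dom D T m" and "(T ^^ m) fhc_vector = (\<Sum>n. (T ^^ m) (fhc_term n))"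
    by (rule closed_pow_tendsto)+
qed

lemma norm_T_pow_fhc_vector_diff_le:
  assumes "m \<in> E k"
  shows "norm ((T ^^ m) fhc_vector - Y k) \<le> (2 * real k + 4) * (1/2)^k"
proof (rule Lim_norm_ubound[OF trivial_limit_sequentially])
  show "(\<lambda>N. (\<Sum>n<N. (T ^^ m) (fhc_term n)) - Y k) \<longlonglongrightarrow> (T ^^ m) fhc_vector - Y k"
    unfolding fhc_vector_in_pow_dom(2)
    by (intro tendsto_diff tendsto_const summable_LIMSEQ summable_T_pow_fhc_term)
  show "\<forall>\<^sub>F N in sequentially. norm ((\<Sum>n<N. (T ^^ m) (fhc_term n)) - Y k) \<le> (2 * real k + 4) * (1/2)^k"
    using eventually_gt_at_top[of m]
  proof eventually_elim
    fix N assume "m < N"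
    hence "(\<Sum>n<N. (T ^^ m) (fhc_term n)) = Y k + (\<Sum>n\<in>{..<N} - {m}. (T ^^ m) (fhc_term n))"
      using T_pow_fhc_term[OF assms, of m] S_0[OF Y_in_X0] by (subst sum.remove) auto
    thus "norm ((\<Sum>n<N. (T ^^ m) (fhc_term n)) - Y k) \<le> (2 * real k + 4) * (1/2)^k"
      using norm_sum_T_pow_fhc_term_le[OF assms, of "{..<N} - {m}"] by simp
  qed
qed

lemma freq_hypercyclic_fhc_vector:
  assumes Y_dense: "\<And>u e k0. 0 < e \<Longrightarrow> \<exists>k\<ge>k0. dist (Y k) u < e"
    and E_density: "\<And>j. 0 < lower_density (E j)"
  shows "freq_hypercyclic D T"
proof -
  have "fhc_vector \<in> D" using fhc_vector_in_pow_dom(1)[of 1] by (simp add: pow_dom_def)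
  moreover have "(T ^^ n) fhc_vector \<in> D" for n
    using fhc_vector_in_pow_dom(1)[of "Suc n"] by (simp add: pow_dom_def)
  moreover have "0 < lower_density {n. (T ^^ n) fhc_vector \<in> U}" if "open U" "U \<noteq> {}" for U
  proof -
    obtain u \<epsilon> where "0 < \<epsilon>" "ball u \<epsilon> \<subseteq> U" using \<open>open U\<close> \<open>U \<noteq> {}\<close> open_contains_ball by blast
    have "(\<lambda>k. 2 * (real k * (1/2::real)^k) + 4 * (1/2)^k) \<longlonglongrightarrow> 2 * 0 + 4 * 0"
      using powser_times_n_limit_0[of "1/2::real"] by (intro tendsto_intros) simp_all
    hence "(\<lambda>k. (2 * real k + 4) * (1/2::real)^k) \<longlonglongrightarrow> 0" by (simp add: algebra_simps)
    hence "\<forall>\<^sub>F k in sequentially. (2 * real k + 4) * (1/2::real)^k < \<epsilon> / 2"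
      by (rule order_tendstoD(2)) (use \<open>0 < \<epsilon>\<close> in simp)
    then obtain K0 where K0: "\<And>k. K0 \<le> k \<Longrightarrow> (2 * real k + 4) * (1/2::real)^k < \<epsilon> / 2"
      by (auto simp: eventually_sequentially)
    obtain k where k: "K0 \<le> k" "dist (Y k) u < \<epsilon> / 2" using Y_dense \<open>0 < \<epsilon>\<close> half_gt_zero by blast
    have "E k \<subseteq> {n. (T ^^ n) fhc_vector \<in> U}"
    proof
      fix m assume "m \<in> E k"
      have "dist ((T ^^ m) fhc_vector) u \<le> dist ((T ^^ m) fhc_vector) (Y k) + dist (Y k) u"
        by (rule dist_triangle)
      also have "\<dots> < \<epsilon>"
        using norm_T_pow_fhc_vector_diff_le[OF \<open>m \<in> E k\<close>] K0[OF k(1)] k(2) by (simp add: dist_norm)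
      finally show "m \<in> {n. (T ^^ n) fhc_vector \<in> U}" using \<open>ball u \<epsilon> \<subseteq> U\<close> by (auto simp: dist_commute)
    qed
    thus ?thesis using E_density[of k] lower_density_mono by (metis order_less_le_trans)
  qed
  ultimately show ?thesis unfolding freq_hypercyclic_def by blast
qed

end

lemma dense_recurrent_sequence:
  fixes X0 :: "'a::metric_space set"
  assumes "separable_space TYPE('a)" and "closure X0 = UNIV"
  obtains Y :: "nat \<Rightarrow> 'a" where "range Y \<subseteq> X0" and "\<And>u e k0. 0 < e \<Longrightarrow> \<exists>k\<ge>k0. dist (Y k) u < e"
proof -
  obtain C :: "'a set" where C: "countable C" "closure C = UNIV"
    using assms(1) unfolding separable_space_def by blast
  have "\<exists>z\<in>X0. dist z (from_nat_into C i) < inverse (real (Suc q))" for i q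
  proof -
    have "\<forall>e>0. \<exists>z\<in>X0. dist z (from_nat_into C i) < e"
      using assms(2) closure_approachable by blast
    thus ?thesis by (meson inverse_positive_iff_positive of_nat_0_less_iff zero_less_Suc)
  qed
  then obtain z where z: "\<And>i q. z i q \<in> X0" "\<And>i q. dist (z i q) (from_nat_into C i) < inverse (real (Suc q))"
    by metis
  define Y where "Y k = case_prod z (prod_decode (fst (prod_decode k)))" for k
  have Y_range: "range Y \<subseteq> X0" using z(1) by (auto simp: Y_def split: prod.splits)
  have Y_close: "\<exists>k\<ge>k0. dist (Y k) u < e" if "0 < e" for u e k0
  proof -
    have "u \<in> closure C" using C(2) by simp
    then obtain c where c: "c \<in> C" "dist c u < e / 2"
      using \<open>0 < e\<close> unfolding closure_approachable by (meson half_gt_zero)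
    obtain i where i: "from_nat_into C i = c" using from_nat_into_surj[OF C(1) c(1)] by blast
    obtain q where q: "inverse (real (Suc q)) < e / 2"
      using reals_Archimedean \<open>0 < e\<close> half_gt_zero by blast
    define k where "k = prod_encode (prod_encode (i, q), k0)"
    have "dist (Y k) u \<le> dist (z i q) c + dist c u"
      using dist_triangle[of "z i q" u c] by (simp add: Y_def k_def)
    also have "\<dots> < e" using z(2)[of i q] i q c(2) by simp
    finally have "dist (Y k) u < e" .
    moreover have "k0 \<le> k" unfolding k_def by (rule le_prod_encode_2)
    ultimately show ?thesis by auto
  qed
  show ?thesis by (rule that[OF Y_range Y_close])
qed

theorem (in frequent_hypercyclicity_criterion) freq_hypercyclic:
  assumes "separable_space TYPE('a)" and "closure X0 = UNIV"
  shows "freq_hypercyclic D T"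
proof -
  obtain Y :: "nat \<Rightarrow> 'a" where Y: "range Y \<subseteq> X0" and Y_dense: "\<And>u e k0. 0 < e \<Longrightarrow> \<exists>k\<ge>k0. dist (Y k) u < e"
    using dense_recurrent_sequence[OF assms] by metis
  have "\<exists>r. \<forall>F. finite F \<longrightarrow> (\<forall>d\<in>F. r < d) \<longrightarrow>
      norm (\<Sum>d\<in>F. (T ^^ d) (Y i)) < (1/2)^j \<and> norm (\<Sum>d\<in>F. S d (Y i)) < (1/2)^j" for i j
  proof -
    have "Y i \<in> X0" using Y by auto
    then obtain r where "\<And>F. finite F \<Longrightarrow> \<forall>d\<in>F. r < d \<Longrightarrow>
        norm (\<Sum>d\<in>F. (T ^^ d) (Y i)) < (1/2)^j \<and> norm (\<Sum>d\<in>F. S d (Y i)) < (1/2)^j"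
      using uncond_tails[of "Y i" "(1/2)^j"] by auto
    thus ?thesis by blast
  qed
  then obtain R where R: "\<And>i j F. finite F \<Longrightarrow> \<forall>d\<in>F. R i j < d \<Longrightarrow>
      norm (\<Sum>d\<in>F. (T ^^ d) (Y i)) < (1/2)^j \<and> norm (\<Sum>d\<in>F. S d (Y i)) < (1/2)^j"
    by metis
  define L where "L j = (\<Sum>i\<le>j. R i j) + j + 1" for j
  obtain E where E: "separated_by L E" and E_density: "\<And>j. 0 < lower_density (E j)"
    using exists_separated_sets_pos_density by blast
  interpret frequent_hypercyclicity_construction D T X0 S Y R L E
  proof
    show "R i j + j < L j" if "i \<le> j" for i j
      using member_le_sum[of i "{..j}" "\<lambda>i. R i j"] that by (simp add: L_def)
  qed (use Y R E in auto)
  show ?thesis using Y_dense E_density by (rule freq_hypercyclic_fhc_vector)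
qed

section \<open>Rotations of the operator\<close>

lemma pow_dom_Suc: "x \<in> pow_dom D A (Suc n) \<longleftrightarrow> x \<in> pow_dom D A n \<and> (A ^^ n) x \<in> D"
  by (auto simp: pow_dom_def less_Suc_eq)

lemma funpow_right_inverse:
  assumes "B ` X0 \<subseteq> X0" and "\<forall>x\<in>X0. A (B x) = x" and "y \<in> X0"
  shows "(B ^^ n) y \<in> X0" and "m \<le> n \<Longrightarrow> (A ^^ m) ((B ^^ n) y) = (B ^^ (n - m)) y"
proof -
  show in_X0: "(B ^^ k) y \<in> X0" for k
    using assms(1,3) by (induction k) auto
  show "m \<le> n \<Longrightarrow> (A ^^ m) ((B ^^ n) y) = (B ^^ (n - m)) y"
  proof (induction m)
    case (Suc m)
    hence "n - m = Suc (n - Suc m)" by simp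
    hence "(B ^^ (n - m)) y = B ((B ^^ (n - Suc m)) y)" by simp
    thus ?case using Suc assms(2) in_X0 by simp
  qed simp
qed

locale scalar_multiplication =
  fixes K :: "complex set" and smul :: "complex \<Rightarrow> 'a::banach \<Rightarrow> 'a"
  assumes scalar_structure: "scalar_structure K smul"
begin

lemma smul_of_real: "smul (complex_of_real r) x = r *\<^sub>R x"
  and smul_mult: "a \<in> K \<Longrightarrow> b \<in> K \<Longrightarrow> smul (a * b) x = smul a (smul b x)"
  and smul_add_left: "a \<in> K \<Longrightarrow> b \<in> K \<Longrightarrow> smul (a + b) x = smul a x + smul b x"
  and smul_add_right: "a \<in> K \<Longrightarrow> smul a (x + y) = smul a x + smul a y"
  and norm_smul: "a \<in> K \<Longrightarrow> norm (smul a x) = cmod a * norm x"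
  using scalar_structure by (simp_all add: scalar_structure_def)

lemma K_cases: "K = range complex_of_real \<or> K = UNIV"
  using scalar_structure by (simp add: scalar_structure_def)

lemma of_real_in_K: "complex_of_real r \<in> K"
  using K_cases by auto

lemma mult_in_K: "a \<in> K \<Longrightarrow> b \<in> K \<Longrightarrow> a * b \<in> K"
  using K_cases by (metis UNIV_I image_iff of_real_mult)

lemma power_in_K: "a \<in> K \<Longrightarrow> a ^ n \<in> K"
  using of_real_in_K[of 1] by (induction n) (auto intro: mult_in_K)

lemma cnj_in_K: "a \<in> K \<Longrightarrow> cnj a \<in> K"
  using K_cases by auto

lemma smul_one: "smul 1 x = x"
  using smul_of_real[of 1 x] by simp

lemma smul_zero_left: "smul 0 x = 0"
  using smul_of_real[of 0 x] by simp

lemma bounded_linear_smul: "a \<in> K \<Longrightarrow> bounded_linear (smul a)"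
proof (rule bounded_linear_intro[where K = "cmod a"])
  fix x y and r :: real assume a: "a \<in> K"
  show "smul a (x + y) = smul a x + smul a y" using smul_add_right[OF a] .
  show "norm (smul a x) \<le> norm x * cmod a" using norm_smul[OF a] by (simp add: mult.commute)
  have "smul a (r *\<^sub>R x) = smul (a * complex_of_real r) x"
    using smul_mult[OF a of_real_in_K] smul_of_real by simp
  also have "\<dots> = r *\<^sub>R smul a x"
    using smul_mult[OF of_real_in_K a] smul_of_real by (simp add: mult.commute)
  finally show "smul a (r *\<^sub>R x) = r *\<^sub>R smul a x" .
qed

lemma smul_sum: "a \<in> K \<Longrightarrow> smul a (sum f F) = (\<Sum>i\<in>F. smul a (f i))"
  using linear_sum[OF bounded_linear.linear[OF bounded_linear_smul]] by blast

lemma smul_Re_Im: "c \<in> K \<Longrightarrow> smul c x = Re c *\<^sub>R x + smul (\<i> * complex_of_real (Im c)) x"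
proof -
  assume c: "c \<in> K"
  have iK: "\<i> * complex_of_real (Im c) \<in> K"
    using K_cases c of_real_in_K[of 0] by auto
  have "c = complex_of_real (Re c) + \<i> * complex_of_real (Im c)" by (simp add: complex_eq_iff)
  hence "smul c x = smul (complex_of_real (Re c)) x + smul (\<i> * complex_of_real (Im c)) x"
    using smul_add_left[OF of_real_in_K iK] by metis
  thus ?thesis by (simp add: smul_of_real)
qed

text \<open>Over the reals the left-hand side vanishes; over the complex numbers it is \<open>i\<close> times the
  right-hand side.\<close>
lemma norm_sum_smul_Im_le:
  assumes "\<And>d. c d \<in> K"
  shows "norm (\<Sum>d\<in>F. smul (\<i> * complex_of_real (Im (c d))) (u d)) \<le> norm (\<Sum>d\<in>F. Im (c d) *\<^sub>R u d)"
proof (cases "K = UNIV")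
  case True
  have "(\<Sum>d\<in>F. smul (\<i> * complex_of_real (Im (c d))) (u d)) = smul \<i> (\<Sum>d\<in>F. Im (c d) *\<^sub>R u d)"
    using True by (simp add: smul_mult of_real_in_K smul_of_real smul_sum)
  thus ?thesis using True by (simp add: norm_smul)
next
  case False
  hence "Im (c d) = 0" for d using assms[of d] K_cases by auto
  thus ?thesis by (simp add: smul_zero_left)
qed

lemma uncond_conv_smul:
  assumes u: "uncond_conv u" and c: "\<And>d. c d \<in> K" "\<And>d. cmod (c d) \<le> 1"
  shows "uncond_conv (\<lambda>d. smul (c d) (u d))"
  unfolding uncond_conv_iff
proof (intro allI impI)
  fix e :: real assume "0 < e"
  then obtain N where N: "\<And>F. finite F \<Longrightarrow> \<forall>d\<in>F. N < d \<Longrightarrow> norm (sum u F) < e / 8"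
    using u unfolding uncond_conv_iff by (meson divide_pos_pos zero_less_numeral)
  have "norm (\<Sum>d\<in>F. smul (c d) (u d)) < e" if F: "finite F" "\<forall>d\<in>F. N < d" for F
  proof -
    have subsums: "\<forall>G\<subseteq>F. norm (sum u G) \<le> e / 8"
      using F N by (meson finite_subset less_imp_le subsetD)
    have "(\<Sum>d\<in>F. smul (c d) (u d))
          = (\<Sum>d\<in>F. Re (c d) *\<^sub>R u d) + (\<Sum>d\<in>F. smul (\<i> * complex_of_real (Im (c d))) (u d))"
      unfolding sum.distrib[symmetric] using smul_Re_Im[OF c(1)] by simp
    also have "norm \<dots> \<le> norm (\<Sum>d\<in>F. Re (c d) *\<^sub>R u d) + norm (\<Sum>d\<in>F. Im (c d) *\<^sub>R u d)"
      by (rule order_trans[OF norm_triangle_ineq add_left_mono[OF norm_sum_smul_Im_le[OF c(1)]]])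
    also have "\<dots> \<le> 2 * (e / 8) + 2 * (e / 8)"
    proof -
      have "\<bar>Re (c d)\<bar> \<le> 1" "\<bar>Im (c d)\<bar> \<le> 1" for d
        using abs_Re_le_cmod[of "c d"] abs_Im_le_cmod[of "c d"] c(2)[of d] by linarith+
      thus ?thesis using F(1) subsums by (intro add_mono norm_sum_scaleR_le_of_subsums) auto
    qed
    also have "\<dots> < e" using \<open>0 < e\<close> by simp
    finally show ?thesis .
  qed
  thus "\<exists>N. \<forall>F. finite F \<longrightarrow> (\<forall>d\<in>F. N < d) \<longrightarrow> norm (\<Sum>d\<in>F. smul (c d) (u d)) < e" by blast
qed

lemma pow_dom_smul:
  assumes op: "linear_operator K smul D A" and c: "c \<in> K" and x: "x \<in> pow_dom D A n"
  shows "smul c x \<in> pow_dom D A n" and "(A ^^ n) (smul c x) = smul c ((A ^^ n) x)"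
proof -
  have eq: "(A ^^ k) (smul c x) = smul c ((A ^^ k) x)" if "k \<le> n" for k
    using that
  proof (induction k)
    case (Suc k)
    hence "(A ^^ k) x \<in> D" using x by (auto simp: pow_dom_def)
    thus ?case using Suc op c by (simp add: linear_operator_def)
  qed simp
  show "(A ^^ n) (smul c x) = smul c ((A ^^ n) x)" using eq by simp
  show "smul c x \<in> pow_dom D A n"
    using x eq op c by (auto simp: pow_dom_def linear_operator_def)
qed

lemma smul_inverse: "a \<in> K \<Longrightarrow> b \<in> K \<Longrightarrow> a * b = 1 \<Longrightarrow> smul a (smul b x) = x"
  by (simp add: smul_mult[symmetric] smul_one)

context
  fixes D :: "'a set" and A :: "'a \<Rightarrow> 'a" and lam mu :: complex
  assumes op: "linear_operator K smul D A"
    and lam: "lam \<in> K" and mu: "mu \<in> K" and lam_mu: "lam * mu = 1"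
begin

lemma smul_power_eq_iff: "y = smul (lam ^ n) z \<longleftrightarrow> smul (mu ^ n) y = z"
proof -
  have "lam ^ n * mu ^ n = 1" "mu ^ n * lam ^ n = 1"
    using lam_mu by (simp_all add: power_mult_distrib[symmetric] mult.commute)
  thus ?thesis
    using smul_inverse[OF power_in_K[OF lam] power_in_K[OF mu]]
      smul_inverse[OF power_in_K[OF mu] power_in_K[OF lam]] by auto
qed

lemma smul_power_cancel: "smul (mu ^ n) (smul (lam ^ n) x) = x"
  using smul_power_eq_iff by blast

lemma smul_power_in_D_iff: "smul (lam ^ n) x \<in> D \<longleftrightarrow> x \<in> D"
proof -
  have closed: "smul c y \<in> D" if "c \<in> K" "y \<in> D" for c y
    using op that by (simp add: linear_operator_def)
  show ?thesis
    using closed[OF power_in_K[OF lam, of n], of x] closed[OF power_in_K[OF mu, of n], of "smul (lam ^ n) x"]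
      smul_power_cancel[where n = n and x = x] by auto
qed

lemma rotation_pow:
  "pow_dom D (\<lambda>x. smul lam (A x)) n = pow_dom D A n \<and>
   (\<forall>x\<in>pow_dom D A n. ((\<lambda>x. smul lam (A x)) ^^ n) x = smul (lam ^ n) ((A ^^ n) x))"
proof (induction n)
  case 0 then show ?case by (simp add: smul_one pow_dom_def)
next
  case (Suc n)
  have "((\<lambda>x. smul lam (A x)) ^^ Suc n) x = smul (lam ^ Suc n) ((A ^^ Suc n) x)"
    if "x \<in> pow_dom D A (Suc n)" for x
  proof -
    have "(A ^^ n) x \<in> D" "x \<in> pow_dom D A n" using that by (simp_all add: pow_dom_Suc)
    thus ?thesis using Suc.IH op power_in_K[OF lam]
      by (simp add: linear_operator_def smul_mult[OF lam])
  qed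
  thus ?case using Suc.IH by (auto simp: pow_dom_Suc smul_power_in_D_iff)
qed

lemma pow_dom_rotation: "pow_dom D (\<lambda>x. smul lam (A x)) n = pow_dom D A n"
  and funpow_rotation:
    "x \<in> pow_dom D A n \<Longrightarrow> ((\<lambda>x. smul lam (A x)) ^^ n) x = smul (lam ^ n) ((A ^^ n) x)"
  using rotation_pow by blast+

lemma funpow_rotation_right_inverse:
  assumes B_maps: "B ` X0 \<subseteq> X0" and AB: "\<forall>x\<in>X0. A (B x) = x"
    and X0_sub: "X0 \<subseteq> (\<Inter>n. pow_dom D A n)" and "y \<in> X0" and "m \<le> n"
  shows "((\<lambda>x. smul lam (A x)) ^^ m) (smul (mu ^ n) ((B ^^ n) y)) = smul (mu ^ (n - m)) ((B ^^ (n - m)) y)"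
proof -
  have dom: "(B ^^ n) y \<in> pow_dom D A m"
    using funpow_right_inverse(1)[OF B_maps AB \<open>y \<in> X0\<close>] X0_sub by blast
  have "mu ^ n = mu ^ (n - m) * mu ^ m"
    using \<open>m \<le> n\<close> by (simp flip: power_add)
  hence "lam ^ m * mu ^ n = mu ^ (n - m) * (lam * mu) ^ m"
    by (simp add: power_mult_distrib ac_simps)
  hence "lam ^ m * mu ^ n = mu ^ (n - m)" using lam_mu by simp
  moreover have "(A ^^ m) (smul (mu ^ n) ((B ^^ n) y)) = smul (mu ^ n) ((B ^^ (n - m)) y)"
    using pow_dom_smul(2)[OF op power_in_K[OF mu] dom]
      funpow_right_inverse(2)[OF B_maps AB \<open>y \<in> X0\<close> \<open>m \<le> n\<close>] by simp
  ultimately show ?thesis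
    using funpow_rotation[OF pow_dom_smul(1)[OF op power_in_K[OF mu] dom]]
      smul_mult[OF power_in_K[OF lam] power_in_K[OF mu], symmetric] by simp
qed

lemma closed_pow_rotation:
  assumes "closed_pow D A r"
  shows "closed_pow D (\<lambda>x. smul lam (A x)) r"
proof -
  let ?G = "{(x, (A ^^ r) x) | x. x \<in> pow_dom D A r}"
  have "{(x, ((\<lambda>x. smul lam (A x)) ^^ r) x) | x. x \<in> pow_dom D (\<lambda>x. smul lam (A x)) r}
        = {(x, smul (lam ^ r) ((A ^^ r) x)) | x. x \<in> pow_dom D A r}"
    by (auto simp: pow_dom_rotation funpow_rotation)
  also have "\<dots> = (\<lambda>p. (fst p, smul (mu ^ r) (snd p))) -` ?G"
  proof (intro set_eqI iffI)
    fix p assume "p \<in> (\<lambda>p. (fst p, smul (mu ^ r) (snd p))) -` ?G"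
    moreover obtain x y where "p = (x, y)" by fastforce
    ultimately have "x \<in> pow_dom D A r" "y = smul (lam ^ r) ((A ^^ r) x)"
      by (auto simp: smul_power_eq_iff)
    thus "p \<in> {(x, smul (lam ^ r) ((A ^^ r) x)) | x. x \<in> pow_dom D A r}"
      using \<open>p = (x, y)\<close> by blast
  qed (auto simp: smul_power_cancel)
  finally have graph: "{(x, ((\<lambda>x. smul lam (A x)) ^^ r) x) | x. x \<in> pow_dom D (\<lambda>x. smul lam (A x)) r}
        = (\<lambda>p. (fst p, smul (mu ^ r) (snd p))) -` ?G" .
  have "continuous (at p) (\<lambda>p. (fst p, smul (mu ^ r) (snd p)))" for p
    using bounded_linear.continuous[OF bounded_linear_smul[OF power_in_K[OF mu]]
        continuous_snd[OF continuous_ident]]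
    by (intro continuous_Pair continuous_fst continuous_ident)
  with assms show ?thesis
    unfolding closed_pow_def graph by (intro continuous_closed_vimage)
qed

end

end

lemma (in scalar_multiplication) rotation_criterion:
  assumes op: "linear_operator K smul D A"
    and closed_powers: "\<forall>r\<ge>1. closed_pow D A r"
    and X0_sub: "X0 \<subseteq> (\<Inter>n. pow_dom D A n)"
    and B_maps: "B ` X0 \<subseteq> X0" and AB: "\<forall>x\<in>X0. A (B x) = x"
    and sumA: "\<forall>x\<in>X0. uncond_conv (\<lambda>n. (A ^^ n) x)"
    and sumB: "\<forall>x\<in>X0. uncond_conv (\<lambda>n. (B ^^ n) x)"
    and lam: "lam \<in> K" "cmod lam = 1"
  shows "frequent_hypercyclicity_criterion D (\<lambda>x. smul lam (A x)) X0
           (\<lambda>n y. smul (cnj lam ^ n) ((B ^^ n) y))"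
proof -
  define mu where "mu = cnj lam"
  have mu: "mu \<in> K" "cmod mu = 1" using lam cnj_in_K by (simp_all add: mu_def)
  have lam_mu: "lam * mu = 1"
    using lam(2) complex_norm_square[of lam] by (simp add: mu_def)
  note pow_dom_rotation = pow_dom_rotation[OF op lam(1) mu(1) lam_mu]
    and funpow_rotation = funpow_rotation[OF op lam(1) mu(1) lam_mu]
  have X0_dom: "(B ^^ n) y \<in> pow_dom D A m" if "y \<in> X0" for y n m
    using funpow_right_inverse(1)[OF B_maps AB that] X0_sub by blast
  have S_dom: "smul (mu ^ n) ((B ^^ n) y) \<in> pow_dom D A m" if "y \<in> X0" for y n m
    using pow_dom_smul(1)[OF op power_in_K[OF mu(1)] X0_dom[OF that]] .
  show ?thesis
    unfolding mu_def[symmetric]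
  proof unfold_locales
    show "0 \<in> D" "\<And>x y. x \<in> D \<Longrightarrow> y \<in> D \<Longrightarrow> x + y \<in> D"
      using op by (simp_all add: linear_operator_def)
    show "smul lam (A (x + y)) = smul lam (A x) + smul lam (A y)" if "x \<in> D" "y \<in> D" for x y
      using op that lam(1) by (simp add: linear_operator_def smul_add_right)
    show "closed_pow D (\<lambda>x. smul lam (A x)) r" if "1 \<le> r" for r
      using closed_pow_rotation[OF op lam(1) mu(1) lam_mu] closed_powers that by blast
    show "smul (mu ^ n) ((B ^^ n) y) \<in> pow_dom D (\<lambda>x. smul lam (A x)) m" if "y \<in> X0" for y n m
      using S_dom[OF that] by (simp add: pow_dom_rotation)
    show "smul (mu ^ 0) ((B ^^ 0) y) = y" for y by (simp add: smul_one)
    show "((\<lambda>x. smul lam (A x)) ^^ m) (smul (mu ^ n) ((B ^^ n) y)) = smul (mu ^ (n - m)) ((B ^^ (n - m)) y)"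
      if "y \<in> X0" "m \<le> n" for y m n
      using funpow_rotation_right_inverse[OF op lam(1) mu(1) lam_mu B_maps AB X0_sub that] .
    show "uncond_conv (\<lambda>n. ((\<lambda>x. smul lam (A x)) ^^ n) y)" if "y \<in> X0" for y
    proof -
      have "uncond_conv (\<lambda>n. smul (lam ^ n) ((A ^^ n) y))"
        using sumA that lam by (intro uncond_conv_smul) (auto simp: power_in_K norm_power)
      moreover have "y \<in> pow_dom D A n" for n using X0_sub that by blast
      ultimately show ?thesis by (simp add: funpow_rotation)
    qed
    show "uncond_conv (\<lambda>n. smul (mu ^ n) ((B ^^ n) y))" if "y \<in> X0" for y
      using sumB that mu by (intro uncond_conv_smul) (auto simp: power_in_K norm_power)
  qed
qed

theorem corollary2p5:
  fixes K :: "complex set" and smul :: "complex \<Rightarrow> 'a::banach \<Rightarrow> 'a"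
    and D :: "'a set" and A :: "'a \<Rightarrow> 'a"
    and X0 :: "'a set" and B :: "'a \<Rightarrow> 'a" and lam :: complex
  assumes scal: "scalar_structure K smul"
    and infdim: "infinite_dim K smul"
    and sep: "separable_space TYPE('a)"
    and op: "linear_operator K smul D A"
    and dense_dom: "closure D = UNIV"
    and closed_powers: "\<forall>r\<ge>1. closed_pow D A r"
    and X0_sub: "X0 \<subseteq> (\<Inter>n. pow_dom D A n)"
    and X0_dense: "closure X0 = UNIV"
    and B_maps: "B ` X0 \<subseteq> X0"
    and AB: "\<forall>x\<in>X0. A (B x) = x"
    and sumA: "\<forall>x\<in>X0. uncond_conv (\<lambda>n. (A ^^ n) x)"
    and sumB: "\<forall>x\<in>X0. uncond_conv (\<lambda>n. (B ^^ n) x)"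
    and lam: "lam \<in> K" "cmod lam = 1"
  shows "freq_hypercyclic D (\<lambda>x. smul lam (A x))"
proof -
  interpret scalar_multiplication K smul
    using scal by unfold_locales
  have "frequent_hypercyclicity_criterion D (\<lambda>x. smul lam (A x)) X0
          (\<lambda>n y. smul (cnj lam ^ n) ((B ^^ n) y))"
    using op closed_powers X0_sub B_maps AB sumA sumB lam by (rule rotation_criterion)
  thus ?thesis
    using sep X0_dense by (rule frequent_hypercyclicity_criterion.freq_hypercyclic)
qed

end
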